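(* If $M\subseteq\mathbb{N}$ is a finite strongly 3-separating set, then there exists $x\in\mathbb{N}\setminus M$ such that $M\cup\{x\}$ is also strongly 3-separating.
   Context: $\mathbb{N}=\{1,2,3,\dots\}$. A set $M\subseteq\mathbb{N}$ is 3-separating if $|M|\geq 3$ and for any two triples $(m_1,m_2,m_3)$ and $(n_1,n_2,n_3)$, each consisting of three distinct elements of $M$, we have $n_2(m_3-m_1)=n_1(m_3-m_2)+n_3(m_2-m_1)$ if and only if $(m_1,m_2,m_3)=(n_1,n_2,n_3)$. A set $M$ is strongly 3-separating if it is 3-separating and moreover for any two pairs $(m_1,m_2)$, $(n_1,n_2)$, each consisting of two distinct elements of $M$, we have $m_1-m_2+n_2-n_1=0$ if and only if $(m_1,m_2)=(n_1,n_2)$. *)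

theory Defs
  imports Main
begin

text \<open>Natural numbers here are the positive integers; a subset of \<open>\<nat> = {1,2,3,...}\<close>
  is modelled as a set of type \<open>nat set\<close> not containing 0. Arithmetic in the
  defining equations is carried out in \<open>int\<close>.\<close>

definition three_separating :: "nat set \<Rightarrow> bool" where
  "three_separating M \<longleftrightarrow> 0 \<notin> M \<and> card M \<ge> 3 \<and>
     (\<forall>m1\<in>M. \<forall>m2\<in>M. \<forall>m3\<in>M. \<forall>n1\<in>M. \<forall>n2\<in>M. \<forall>n3\<in>M.
        m1 \<noteq> m2 \<and> m1 \<noteq> m3 \<and> m2 \<noteq> m3 \<and> n1 \<noteq> n2 \<and> n1 \<noteq> n3 \<and> n2 \<noteq> n3 \<longrightarrow>
        (int n2 * (int m3 - int m1) = int n1 * (int m3 - int m2) + int n3 * (int m2 - int m1)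
          \<longleftrightarrow> (m1, m2, m3) = (n1, n2, n3)))"

definition strongly_three_separating :: "nat set \<Rightarrow> bool" where
  "strongly_three_separating M \<longleftrightarrow> three_separating M \<and>
     (\<forall>m1\<in>M. \<forall>m2\<in>M. \<forall>n1\<in>M. \<forall>n2\<in>M. m1 \<noteq> m2 \<and> n1 \<noteq> n2 \<longrightarrow>
        (int m1 - int m2 + int n2 - int n1 = 0 \<longleftrightarrow> (m1, m2) = (n1, n2)))"

end

theory Submission
  imports Defs
begin

text \<open>The defining equation of 3-separation says that the points (m_i, n_i) are collinear, and
  strong 3-separation says that all nonzero differences of elements are distinct. For
  M \<subseteq> {0..K} take x > 2K(K+1). If x enters only one of the two triples, or both at different
  positions, the determinant is dominated by a multiple of x or x^2 and cannot vanish; if x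
  sits at the same position in both, its coefficient must vanish, which is a coincidence
  of two differences in M and is ruled out by strong separation. Differences involving x
  are too large to coincide with any other difference.\<close>

text \<open>Twice the signed area of the triangle with vertices (m_i, n_i).\<close>

definition det3 :: "int \<Rightarrow> int \<Rightarrow> int \<Rightarrow> int \<Rightarrow> int \<Rightarrow> int \<Rightarrow> int" where
  "det3 m1 m2 m3 n1 n2 n3 = m1 * (n2 - n3) + m2 * (n3 - n1) + m3 * (n1 - n2)"

lemma three_separating_equation_iff_det3_eq_0:
  "n2 * (m3 - m1) = n1 * (m3 - m2) + n3 * (m2 - m1) \<longleftrightarrow> det3 m1 m2 m3 n1 n2 n3 = 0"
  by (auto simp: det3_def algebra_simps)

lemma det3_same_rows: "det3 m1 m2 m3 m1 m2 m3 = 0"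
  by (simp add: det3_def algebra_simps)

lemma det3_eq_0_swap_rows: "det3 m1 m2 m3 n1 n2 n3 = 0 \<Longrightarrow> det3 n1 n2 n3 m1 m2 m3 = 0"
  by (simp add: det3_def algebra_simps)

lemma det3_eq_0_swap12: "det3 m1 m2 m3 n1 n2 n3 = 0 \<Longrightarrow> det3 m2 m1 m3 n2 n1 n3 = 0"
  by (simp add: det3_def algebra_simps)

lemma det3_eq_0_swap13: "det3 m1 m2 m3 n1 n2 n3 = 0 \<Longrightarrow> det3 m3 m2 m1 n3 n2 n1 = 0"
  by (simp add: det3_def algebra_simps)

lemma det3_eq_0_swap23: "det3 m1 m2 m3 n1 n2 n3 = 0 \<Longrightarrow> det3 m1 m3 m2 n1 n3 n2 = 0"
  by (simp add: det3_def algebra_simps)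

lemma abs_mult_diff_le:
  fixes a b c K :: int
  assumes "a \<in> {0..K}" "b \<in> {0..K}" "c \<in> {0..K}"
  shows "\<bar>a * (b - c)\<bar> \<le> K * K"
proof -
  have "\<bar>a\<bar> * \<bar>b - c\<bar> \<le> K * K"
    using assms by (intro mult_mono) auto
  then show ?thesis by (simp add: abs_mult)
qed

lemma mult_le_square:
  fixes a b K :: int
  assumes "a \<in> {0..K}" "b \<in> {0..K}"
  shows "a * b \<le> K * K"
  using assms by (auto intro: mult_mono)

lemma le_abs_mult_nonzero:
  fixes X n :: int
  assumes "0 \<le> X" "n \<noteq> 0"
  shows "X \<le> \<bar>X * n\<bar>"
proof -
  have "X * 1 \<le> X * \<bar>n\<bar>"
    using assms by (intro mult_left_mono) auto
  then show ?thesis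
    using assms by (simp add: abs_mult)
qed

lemma det3_one_large_ne_0:
  fixes K X :: int
  assumes "m1 \<in> {0..K}" "m2 \<in> {0..K}" "n1 \<in> {0..K}" "n2 \<in> {0..K}" "n3 \<in> {0..K}"
    and "n1 \<noteq> n2" and "2 * K * K < X"
  shows "det3 m1 m2 X n1 n2 n3 \<noteq> 0"
proof
  assume "det3 m1 m2 X n1 n2 n3 = 0"
  then have eq: "X * (n2 - n1) = m1 * (n2 - n3) + m2 * (n3 - n1)"
    by (simp add: det3_def algebra_simps)
  have "0 \<le> 2 * K * K"
    using assms(1) by simp
  then have "0 \<le> X"
    using \<open>2 * K * K < X\<close> by linarith
  then have "X \<le> \<bar>X * (n2 - n1)\<bar>"
    using assms by (intro le_abs_mult_nonzero) auto
  moreover have "\<bar>m1 * (n2 - n3)\<bar> \<le> K * K" "\<bar>m2 * (n3 - n1)\<bar> \<le> K * K"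
    using assms by (auto intro: abs_mult_diff_le)
  ultimately show False
    using eq \<open>2 * K * K < X\<close> by linarith
qed

lemma det3_two_large_aligned_eq_0D:
  fixes K X :: int
  assumes "m1 \<in> {0..K}" "m2 \<in> {0..K}" "n1 \<in> {0..K}" "n2 \<in> {0..K}"
    and "K * K < X" and "det3 m1 m2 X n1 n2 X = 0"
  shows "m2 - m1 = n2 - n1"
proof (rule ccontr)
  assume ne: "m2 - m1 \<noteq> n2 - n1"
  have eq: "X * (m2 - m1 - (n2 - n1)) = m2 * n1 - m1 * n2"
    using assms(6) by (simp add: det3_def algebra_simps)
  have "0 \<le> X"
    using \<open>K * K < X\<close> zero_le_square[of K] by linarith
  then have "X \<le> \<bar>X * (m2 - m1 - (n2 - n1))\<bar>"
    using ne by (intro le_abs_mult_nonzero) auto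
  moreover have "m2 * n1 \<le> K * K" "m1 * n2 \<le> K * K"
    using assms by (auto intro!: mult_le_square)
  moreover have "0 \<le> m2 * n1" "0 \<le> m1 * n2"
    using assms by auto
  ultimately show False
    using eq \<open>K * K < X\<close> by linarith
qed

lemma det3_two_large_crossed_ne_0:
  fixes K X :: int
  assumes "m1 \<in> {0..K}" "m2 \<in> {0..K}" "n2 \<in> {0..K}" "n3 \<in> {0..K}"
    and "2 * K < X" and "K * K < X"
  shows "det3 m1 m2 X X n2 n3 \<noteq> 0"
proof -
  have eq: "det3 m1 m2 X X n2 n3 = X * (X - m2 - n2) + m1 * (n2 - n3) + m2 * n3"
    by (simp add: det3_def algebra_simps)
  have "X * 1 \<le> X * (X - m2 - n2)"
    using assms by (intro mult_left_mono) auto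
  then have "X \<le> X * (X - m2 - n2)" by simp
  moreover have "\<bar>m1 * (n2 - n3)\<bar> \<le> K * K"
    using assms by (intro abs_mult_diff_le) auto
  moreover have "0 \<le> m2 * n3"
    using assms by auto
  ultimately show ?thesis
    using eq \<open>K * K < X\<close> by linarith
qed

definition distinct_differences :: "nat set \<Rightarrow> bool" where
  "distinct_differences S \<longleftrightarrow> (\<forall>a\<in>S. \<forall>b\<in>S. \<forall>c\<in>S. \<forall>d\<in>S.
     a \<noteq> b \<longrightarrow> int a - int b = int c - int d \<longrightarrow> a = c \<and> b = d)"

definition separates_triples :: "nat set \<Rightarrow> bool" where
  "separates_triples S \<longleftrightarrow> (\<forall>m1\<in>S. \<forall>m2\<in>S. \<forall>m3\<in>S. \<forall>n1\<in>S. \<forall>n2\<in>S. \<forall>n3\<in>S.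
     m1 \<noteq> m2 \<and> m1 \<noteq> m3 \<and> m2 \<noteq> m3 \<and> n1 \<noteq> n2 \<and> n1 \<noteq> n3 \<and> n2 \<noteq> n3 \<longrightarrow>
     det3 (int m1) (int m2) (int m3) (int n1) (int n2) (int n3) = 0 \<longrightarrow>
     (m1, m2, m3) = (n1, n2, n3))"

lemma three_separating_iff:
  "three_separating M \<longleftrightarrow> 0 \<notin> M \<and> 3 \<le> card M \<and> separates_triples M"
proof -
  have iff: "(det3 (int a) (int b) (int c) (int d) (int e) (int f) = 0 \<longleftrightarrow> (a, b, c) = (d, e, f))
      \<longleftrightarrow> (det3 (int a) (int b) (int c) (int d) (int e) (int f) = 0 \<longrightarrow> (a, b, c) = (d, e, f))"
    for a b c d e f :: nat
    by (auto simp: det3_same_rows)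
  show ?thesis
    unfolding three_separating_def separates_triples_def
    by (simp only: three_separating_equation_iff_det3_eq_0 iff)
qed

lemma strongly_three_separating_iff:
  "strongly_three_separating M \<longleftrightarrow> three_separating M \<and> distinct_differences M"
proof -
  have iff: "(a \<noteq> b \<and> c \<noteq> d \<longrightarrow> (int a - int b + int d - int c = 0 \<longleftrightarrow> (a, b) = (c, d)))
      \<longleftrightarrow> (a \<noteq> b \<longrightarrow> int a - int b = int c - int d \<longrightarrow> a = c \<and> b = d)"
    for a b c d :: nat
    by auto
  show ?thesis
    unfolding strongly_three_separating_def distinct_differences_def
    by (simp only: iff)
qed

lemma distinct_differencesD:
  assumes "distinct_differences S" "a \<in> S" "b \<in> S" "c \<in> S" "d \<in> S" "a \<noteq> b"
    and "int a - int b = int c - int d"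
  shows "a = c \<and> b = d"
  using assms unfolding distinct_differences_def by blast

lemma distinct_differences_insert_large:
  assumes "distinct_differences M" and "M \<subseteq> {..K}" and "2 * K < x"
  shows "distinct_differences (insert x M)"
  unfolding distinct_differences_def
proof (intro ballI impI)
  fix a b c d
  assume mem: "a \<in> insert x M" "b \<in> insert x M" "c \<in> insert x M" "d \<in> insert x M"
    and "a \<noteq> b" and diff: "int a - int b = int c - int d"
  have small: "v \<le> K" if "v \<in> M" for v
    using that assms(2) by auto
  show "a = c \<and> b = d"
  proof (cases "a \<in> M \<and> b \<in> M \<and> c \<in> M \<and> d \<in> M")
    case True
    then show ?thesis
      using distinct_differencesD[OF assms(1)] \<open>a \<noteq> b\<close> diff by blast
  next
    case False
    then show ?thesis
      using mem diff \<open>a \<noteq> b\<close> \<open>2 * K < x\<close> small[of a] small[of b] small[of c] small[of d] by auto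
  qed
qed

lemma det3_eq_0_new_point_last:
  assumes "distinct_differences M" and "M \<subseteq> {..K}" and "2 * K * (K + 1) < x"
    and "m1 \<in> M" "m2 \<in> M" "m1 \<noteq> m2"
    and "n1 \<in> insert x M" "n2 \<in> insert x M" "n3 \<in> insert x M" "distinct [n1, n2, n3]"
    and det: "det3 (int m1) (int m2) (int x) (int n1) (int n2) (int n3) = 0"
  shows "(m1, m2, x) = (n1, n2, n3)"
proof -
  have bnd: "int v \<in> {0..int K}" if "v \<in> M" for v
    using that assms(2) by auto
  have "int (2 * K * (K + 1)) < int x"
    using assms(3) by linarith
  then have "2 * (int K * int K) + 2 * int K < int x"
    by (simp add: algebra_simps)
  moreover have "0 \<le> int K * int K" by simp
  ultimately have large: "2 * int K * int K < int x" "2 * int K < int x" "int K * int K < int x"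
    by linarith+
  consider "n1 = x" "n2 \<in> M" "n3 \<in> M" | "n2 = x" "n1 \<in> M" "n3 \<in> M" | "n3 = x" "n1 \<in> M" "n2 \<in> M"
    | "n1 \<in> M" "n2 \<in> M" "n3 \<in> M"
    using assms(7-10) by auto
  then show ?thesis
  proof cases
    case 1
    then show ?thesis
      using det det3_two_large_crossed_ne_0[OF bnd bnd bnd bnd large(2,3)] assms(4,5) by simp
  next
    case 2
    from det3_eq_0_swap12[OF det] show ?thesis
      using det3_two_large_crossed_ne_0[OF bnd bnd bnd bnd large(2,3)] 2 assms(4,5) by simp
  next
    case 3
    then have "int m2 - int m1 = int n2 - int n1"
      using det det3_two_large_aligned_eq_0D[OF bnd bnd bnd bnd large(3)] assms(4,5) by simp
    then have "m2 = n2 \<and> m1 = n1"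
      using distinct_differencesD[OF assms(1), of m2 m1 n2 n1] assms(4-6) 3 by blast
    then show ?thesis
      using 3 by simp
  next
    case 4
    then show ?thesis
      using det det3_one_large_ne_0[OF bnd[OF assms(4)] bnd[OF assms(5)] bnd bnd bnd _ large(1)]
        assms(10) by simp
  qed
qed

lemma separates_triples_insert_large:
  assumes "separates_triples M" and "distinct_differences M"
    and "M \<subseteq> {..K}" and "2 * K * (K + 1) < x"
  shows "separates_triples (insert x M)"
proof -
  have new_in_first: "(m1, m2, m3) = (n1, n2, n3)"
    if new: "x \<in> {m1, m2, m3}" and mem: "m1 \<in> insert x M" "m2 \<in> insert x M" "m3 \<in> insert x M"
      "n1 \<in> insert x M" "n2 \<in> insert x M" "n3 \<in> insert x M"
      and dist: "distinct [m1, m2, m3]" "distinct [n1, n2, n3]"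
      and det: "det3 (int m1) (int m2) (int m3) (int n1) (int n2) (int n3) = 0"
    for m1 m2 m3 n1 n2 n3
  proof -
    note last = det3_eq_0_new_point_last[OF assms(2-4)]
    consider "m3 = x" "m1 \<in> M" "m2 \<in> M" | "m2 = x" "m1 \<in> M" "m3 \<in> M" | "m1 = x" "m2 \<in> M" "m3 \<in> M"
      using new mem(1-3) dist(1) by auto
    then show ?thesis
    proof cases
      case 1
      then show ?thesis
        using last[OF 1(2,3) _ mem(4-6)] dist det by simp
    next
      case 2
      from det3_eq_0_swap23[OF det] show ?thesis
        using last[OF 2(2,3) _ mem(4,6,5)] 2(1) dist by auto
    next
      case 3
      from det3_eq_0_swap13[OF det] show ?thesis
        using last[OF 3(3,2) _ mem(6,5,4)] 3(1) dist by auto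
    qed
  qed
  show ?thesis
    unfolding separates_triples_def
  proof (intro ballI impI)
    fix m1 m2 m3 n1 n2 n3
    assume mem: "m1 \<in> insert x M" "m2 \<in> insert x M" "m3 \<in> insert x M"
        "n1 \<in> insert x M" "n2 \<in> insert x M" "n3 \<in> insert x M"
      and dist: "m1 \<noteq> m2 \<and> m1 \<noteq> m3 \<and> m2 \<noteq> m3 \<and> n1 \<noteq> n2 \<and> n1 \<noteq> n3 \<and> n2 \<noteq> n3"
      and det: "det3 (int m1) (int m2) (int m3) (int n1) (int n2) (int n3) = 0"
    consider "x \<in> {m1, m2, m3}" | "x \<in> {n1, n2, n3}" | "{m1, m2, m3, n1, n2, n3} \<subseteq> M"
      using mem by auto
    then show "(m1, m2, m3) = (n1, n2, n3)"
    proof cases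
      case 1
      then show ?thesis
        using new_in_first[OF _ mem] dist det by simp
    next
      case 2
      then show ?thesis
        using new_in_first[OF _ mem(4-6,1-3) _ _ det3_eq_0_swap_rows[OF det]] dist by auto
    next
      case 3
      then show ?thesis
        using assms(1)[unfolded separates_triples_def, rule_format, of m1 m2 m3 n1 n2 n3] dist det
        by simp
    qed
  qed
qed

theorem lemma2p4:
  fixes M :: "nat set"
  assumes "finite M" and "strongly_three_separating M"
  shows "\<exists>x. x \<noteq> 0 \<and> x \<notin> M \<and> strongly_three_separating (insert x M)"
proof -
  have M: "0 \<notin> M" "3 \<le> card M" "separates_triples M" "distinct_differences M"
    using assms(2) by (simp_all add: strongly_three_separating_iff three_separating_iff)
  define K where "K = Max M"
  define x where "x = 2 * K * (K + 1) + 1"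
  have bound: "M \<subseteq> {..K}"
    using assms(1) by (auto simp: K_def)
  have large: "2 * K * (K + 1) < x"
    by (simp add: x_def)
  then have "2 * K < x" "K < x"
    by (auto simp: algebra_simps)
  then have "x \<notin> M"
    using bound by auto
  moreover have "strongly_three_separating (insert x M)"
    using M \<open>x \<notin> M\<close> \<open>2 * K < x\<close> assms(1)
      separates_triples_insert_large[OF M(3,4) bound large]
      distinct_differences_insert_large[OF M(4) bound]
    by (simp add: strongly_three_separating_iff three_separating_iff)
  ultimately show ?thesis
    by (auto simp: x_def)
qed

end
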